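(* Every open subset of an E-space $X$ is the union of a $\sigma$-point-finite collection of cozero-sets of $X$.
   Context: "Space" means topological $T_0$-space. A zero-set (cozero-set) of $X$ is $f^{-1}(0)$ (resp. its complement) for continuous $f:X\to[0,1]$. A U-representation of $V\subseteq X$ is a sequence $(U_n(V))_{n\in\mathbb{N}}$ with $V=\bigcup_n U_n(V)$, $U_n(V)\subseteq U_{n+1}(V)$, $U_{2n-1}(V)$ a zero-set, $U_{2n}(V)$ a cozero-set. A family $\alpha$ is an almost subbase of $X$ if U-representations of its members can be chosen so that $\alpha\cup\{X\setminus U_{2n-1}(V):V\in\alpha,n\in\mathbb{N}\}$ is a subbase of $X$. A family is strongly point-finite if every countably infinite subfamily contains a finite subfamily with empty intersection; $\sigma$-strongly point-finite ($\sigma$-point-finite) means a countable union of strongly point-finite (point-finite) families. An E-space is a space with a $\sigma$-strongly point-finite almost subbase. *)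

theory Defs
  imports "HOL-Analysis.Analysis"
begin

definition zero_set :: "'a topology \<Rightarrow> 'a set \<Rightarrow> bool" where
  "zero_set X Z \<longleftrightarrow> (\<exists>f. continuous_map X (top_of_set {0..1::real}) f \<and>
      Z = {x \<in> topspace X. f x = 0})"

definition cozero_set :: "'a topology \<Rightarrow> 'a set \<Rightarrow> bool" where
  "cozero_set X C \<longleftrightarrow> (\<exists>f. continuous_map X (top_of_set {0..1::real}) f \<and>
      C = topspace X - {x \<in> topspace X. f x = 0})"

text \<open>U-representation, indexed by n >= 1 as in the paper (the value at 0 is irrelevant).\<close>
definition U_representation :: "'a topology \<Rightarrow> 'a set \<Rightarrow> (nat \<Rightarrow> 'a set) \<Rightarrow> bool" where
  "U_representation X V U \<longleftrightarrow>
     V = (\<Union>n\<in>{1..}. U n) \<and>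
     (\<forall>n\<ge>1. U n \<subseteq> U (Suc n)) \<and>
     (\<forall>n\<ge>1. zero_set X (U (2*n - 1))) \<and>
     (\<forall>n\<ge>1. cozero_set X (U (2*n)))"

text \<open>Subbase: finite intersections (the empty one being the whole space) form a base.\<close>
definition subbase_of :: "'a topology \<Rightarrow> 'a set set \<Rightarrow> bool" where
  "subbase_of X S \<longleftrightarrow> S \<subseteq> Pow (topspace X) \<and>
     topology_generated_by (insert (topspace X) S) = X"

definition almost_subbase :: "'a topology \<Rightarrow> 'a set set \<Rightarrow> bool" where
  "almost_subbase X \<alpha> \<longleftrightarrow> (\<exists>U. (\<forall>V\<in>\<alpha>. U_representation X V (U V)) \<and>
     subbase_of X (\<alpha> \<union> {topspace X - U V (2*n - 1) | V n. V \<in> \<alpha> \<and> n \<ge> 1}))"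

definition point_finite :: "'a topology \<Rightarrow> 'a set set \<Rightarrow> bool" where
  "point_finite X \<gamma> \<longleftrightarrow> (\<forall>x\<in>topspace X. finite {A \<in> \<gamma>. x \<in> A})"

definition strongly_point_finite :: "'a set set \<Rightarrow> bool" where
  "strongly_point_finite \<gamma> \<longleftrightarrow>
     (\<forall>\<beta>\<subseteq>\<gamma>. infinite \<beta> \<and> countable \<beta> \<longrightarrow>
        (\<exists>\<delta>\<subseteq>\<beta>. finite \<delta> \<and> \<Inter>\<delta> = {}))"

definition sigma_point_finite :: "'a topology \<Rightarrow> 'a set set \<Rightarrow> bool" where
  "sigma_point_finite X \<gamma> \<longleftrightarrow> (\<exists>g::nat \<Rightarrow> 'a set set. \<gamma> = (\<Union>n. g n) \<and> (\<forall>n. point_finite X (g n)))"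

definition sigma_strongly_point_finite :: "'a set set \<Rightarrow> bool" where
  "sigma_strongly_point_finite \<gamma> \<longleftrightarrow>
     (\<exists>g::nat \<Rightarrow> 'a set set. \<gamma> = (\<Union>n. g n) \<and> (\<forall>n. strongly_point_finite (g n)))"

definition E_space :: "'a topology \<Rightarrow> bool" where
  "E_space X \<longleftrightarrow> t0_space X \<and> (\<exists>\<alpha>. almost_subbase X \<alpha> \<and> sigma_strongly_point_finite \<alpha>)"

end

theory Submission
  imports Defs
begin

(*
  Let \<alpha> = (\<Union>k. \<V> k) be an almost subbase with each \<V> k strongly point-finite, and U V the
  chosen U-representations. An open set W is a union of finite intersections of subbasic sets,
  i.e. of sets \<Inter>F - \<Union>{U V (2n-1) | (V, n) \<in> G} with F \<subseteq> \<alpha> and G \<subseteq> \<alpha> \<times> {1..} finite.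
  At level m we only admit F, G built from \<V> 0, ..., \<V> m and indices n \<le> m, and shrink each
  V \<in> F to its cozero-set U V (2m); as m grows these cozero-sets still exhaust W.

  A single level is point-finite after discarding redundant sets. A point of \<Inter>{U V (2m) | V \<in> F}
  lies in every V \<in> F, which by point-finiteness leaves finitely many F. For fixed F, strong
  point-finiteness says that every infinite set of level-m zero-sets U V (2n-1) has a finite
  subfamily with empty intersection; a well-founded induction over finite centred subfamilies
  then shows that finitely many G already give the same union of complements.
*)

lemma subbase_of_neighbourhood:
  assumes "subbase_of X S" "openin X W" "x \<in> W"
  obtains F where "finite F" "F \<subseteq> S" "x \<in> topspace X \<inter> \<Inter>F" "topspace X \<inter> \<Inter>F \<subseteq> W"
proof -
  have "(arbitrary union_of finite' intersection_of (\<lambda>T. T \<in> insert (topspace X) S)) W"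
    using assms(1,2) by (metis subbase_of_def openin_topology_generated_by_iff generate_topology_on_eq)
  then obtain T where T: "(finite' intersection_of (\<lambda>T. T \<in> insert (topspace X) S)) T" "x \<in> T" "T \<subseteq> W"
    using \<open>x \<in> W\<close> unfolding union_of_def by blast
  then obtain F where F: "finite F" "F \<noteq> {}" "F \<subseteq> insert (topspace X) S" "x \<in> \<Inter>F" "\<Inter>F \<subseteq> W"
    unfolding intersection_of_def by blast
  have "S \<subseteq> Pow (topspace X)"
    using assms(1) by (simp add: subbase_of_def)
  then have "topspace X \<inter> \<Inter>(F - {topspace X}) = \<Inter>F"
    using F(2,3) by blast
  with F show thesis
    by (intro that[of "F - {topspace X}"]) auto
qed

lemma incseq_eventually_finite_subset:
  assumes "incseq A" "finite F" "F \<subseteq> \<Union>(range A)"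
  shows "eventually (\<lambda>k. F \<subseteq> A k) sequentially"
proof -
  have "eventually (\<lambda>k. V \<in> A k) sequentially" if "V \<in> F" for V
  proof -
    obtain j where "V \<in> A j"
      using assms(3) \<open>V \<in> F\<close> by blast
    then show ?thesis
      using assms(1) unfolding eventually_sequentially incseq_def by blast
  qed
  then show ?thesis
    unfolding subset_eq by (intro eventually_ball_finite[OF assms(2)]) auto
qed

subsection \<open>Cozero-sets\<close>

lemma cozero_set_topspace: "cozero_set X (topspace X)"
  unfolding cozero_set_def
  by (rule exI[of _ "\<lambda>x. 1"]) (auto simp: continuous_map_in_subtopology)

lemma cozero_set_Diff_zero_set: "zero_set X Z \<Longrightarrow> cozero_set X (topspace X - Z)"
  unfolding cozero_set_def zero_set_def by blast

lemma cozero_set_subset_topspace: "cozero_set X C \<Longrightarrow> C \<subseteq> topspace X"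
  unfolding cozero_set_def by blast

lemma cozero_set_Int:
  assumes "cozero_set X A" "cozero_set X B"
  shows "cozero_set X (A \<inter> B)"
proof -
  obtain f where f: "continuous_map X (top_of_set {0..1::real}) f"
    and A: "A = topspace X - {x \<in> topspace X. f x = 0}"
    using assms(1) unfolding cozero_set_def by blast
  obtain g where g: "continuous_map X (top_of_set {0..1::real}) g"
    and B: "B = topspace X - {x \<in> topspace X. g x = 0}"
    using assms(2) unfolding cozero_set_def by blast
  have "continuous_map X euclidean (\<lambda>x. f x * g x)"
    using f g by (intro continuous_intros) (auto simp: continuous_map_in_subtopology)
  moreover have "f x * g x \<in> {0..1}" if "x \<in> topspace X" for x
  proof -
    have "f x \<in> {0..1}" "g x \<in> {0..1}"
      using f g that by (auto simp: continuous_map_def Pi_iff)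
    then show ?thesis
      by (auto intro: mult_le_one)
  qed
  ultimately have "continuous_map X (top_of_set {0..1::real}) (\<lambda>x. f x * g x)"
    by (auto simp: continuous_map_in_subtopology)
  moreover have "A \<inter> B = topspace X - {x \<in> topspace X. f x * g x = 0}"
    using A B by auto
  ultimately show ?thesis
    unfolding cozero_set_def by blast
qed

lemma cozero_set_Inter:
  assumes "finite \<C>" "\<And>C. C \<in> \<C> \<Longrightarrow> cozero_set X C"
  shows "cozero_set X (topspace X \<inter> \<Inter>\<C>)"
  using assms
proof (induction \<C> rule: finite_induct)
  case empty
  then show ?case using cozero_set_topspace by simp
next
  case (insert C \<C>)
  then have "topspace X \<inter> \<Inter>(insert C \<C>) = C \<inter> (topspace X \<inter> \<Inter>\<C>)"
    using cozero_set_subset_topspace by blast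
  moreover have "cozero_set X (C \<inter> (topspace X \<inter> \<Inter>\<C>))"
    using insert by (auto intro!: cozero_set_Int[of X C])
  ultimately show ?case
    by simp
qed

subsection \<open>Strongly point-finite families\<close>

lemma strongly_point_finite_infinite_subfamily:
  assumes "strongly_point_finite \<V>" "\<B> \<subseteq> \<V>" "infinite \<B>"
  obtains \<D> where "\<D> \<subseteq> \<B>" "finite \<D>" "\<Inter>\<D> = {}"
proof -
  obtain \<C> where "\<C> \<subseteq> \<B>" "countable \<C>" "infinite \<C>"
    using infinite_countable_subset'[OF assms(3)] by blast
  with assms(1,2) have "\<exists>\<D>\<subseteq>\<C>. finite \<D> \<and> \<Inter>\<D> = {}"
    unfolding strongly_point_finite_def by simp
  with \<open>\<C> \<subseteq> \<B>\<close> show thesis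
    using that by blast
qed

lemma strongly_point_finite_imp_finite:
  assumes "strongly_point_finite \<V>"
  shows "finite {V \<in> \<V>. y \<in> V}"
proof (rule ccontr)
  assume "infinite {V \<in> \<V>. y \<in> V}"
  then obtain \<D> where "\<D> \<subseteq> {V \<in> \<V>. y \<in> V}" "\<Inter>\<D> = {}"
    by (rule strongly_point_finite_infinite_subfamily[OF assms, rotated]) auto
  then have "y \<in> \<Inter>\<D>"
    by auto
  with \<open>\<Inter>\<D> = {}\<close> show False
    by simp
qed

lemma strongly_point_finite_UN:
  assumes "finite I" "\<And>i. i \<in> I \<Longrightarrow> strongly_point_finite (\<V> i)"
  shows "strongly_point_finite (\<Union>i\<in>I. \<V> i)"
  unfolding strongly_point_finite_def
proof (intro allI impI, elim conjE)
  fix \<B> assume \<B>: "\<B> \<subseteq> (\<Union>i\<in>I. \<V> i)" "infinite \<B>" "countable \<B>"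
  have "\<B> = (\<Union>i\<in>I. \<B> \<inter> \<V> i)"
    using \<B>(1) by auto
  then obtain i where "i \<in> I" "infinite (\<B> \<inter> \<V> i)"
    using \<B>(2) assms(1) by (metis finite_UN)
  then obtain \<D> where "\<D> \<subseteq> \<B> \<inter> \<V> i" "finite \<D>" "\<Inter>\<D> = {}"
    by (rule strongly_point_finite_infinite_subfamily[OF assms(2) Int_lower2])
  then show "\<exists>\<D>\<subseteq>\<B>. finite \<D> \<and> \<Inter>\<D> = {}"
    by auto
qed

lemma strongly_point_finite_shrinking:
  assumes "strongly_point_finite \<V>" "finite I" "T \<subseteq> \<V> \<times> I" "infinite T"
    and shrink: "\<And>p. p \<in> T \<Longrightarrow> Z p \<subseteq> fst p"
  obtains s where "s \<subseteq> T" "finite s" "\<Inter>(Z ` s) = {}"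
proof -
  have "T \<subseteq> fst ` T \<times> I"
    using assms(3) by (auto intro: rev_image_eqI)
  then have "infinite (fst ` T)"
    using assms(2,4) by (meson finite_SigmaI finite_subset)
  moreover have "fst ` T \<subseteq> \<V>"
    using assms(3) by auto
  ultimately obtain \<D> where \<D>: "\<D> \<subseteq> fst ` T" "finite \<D>" "\<Inter>\<D> = {}"
    using strongly_point_finite_infinite_subfamily[OF assms(1)] by metis
  then obtain s where s: "s \<subseteq> T" "finite s" "\<D> = fst ` s"
    using finite_subset_image[OF \<D>(2,1)] by metis
  have "\<Inter>(Z ` s) \<subseteq> \<Inter>(fst ` s)"
    using shrink s(1) by (intro INF_mono) auto
  with \<D>(3) s show thesis
    by (intro that[of s]) auto
qed

lemma wf_centred_supersets:
  fixes Z :: "'i \<Rightarrow> 'a set"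
  assumes empty_Inter: "\<And>S. S \<subseteq> \<Phi> \<Longrightarrow> infinite S \<Longrightarrow> \<exists>s\<subseteq>S. finite s \<and> \<Inter>(Z ` s) = {}"
  shows "wf {(s', s). s \<subset> s' \<and> finite s' \<and> s' \<subseteq> \<Phi> \<and> \<Inter>(Z ` s') \<noteq> {}}"
  unfolding wf_iff_no_infinite_down_chain
proof
  assume "\<exists>f. \<forall>i. (f (Suc i), f i) \<in> {(s', s). s \<subset> s' \<and> finite s' \<and> s' \<subseteq> \<Phi> \<and> \<Inter>(Z ` s') \<noteq> {}}"
  then obtain f :: "nat \<Rightarrow> 'i set" where
    chain: "\<forall>i. f i \<subset> f (Suc i) \<and> finite (f (Suc i)) \<and> f (Suc i) \<subseteq> \<Phi> \<and> \<Inter>(Z ` f (Suc i)) \<noteq> {}"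
    by auto
  have "strict_mono f"
    using chain by (simp add: strict_mono_Suc_iff)
  then have "incseq f"
    by (simp add: strict_mono_mono)
  define S where "S = \<Union>(range f)"
  have "f i \<subseteq> \<Phi>" for i
    using chain[rule_format, of i] by auto
  then have "S \<subseteq> \<Phi>"
    by (auto simp: S_def)
  have "infinite S"
  proof
    assume "finite S"
    moreover have "range f \<subseteq> Pow S"
      by (auto simp: S_def)
    ultimately have "finite (range f)"
      using finite_subset by blast
    with range_inj_infinite[OF strict_mono_imp_inj_on[OF \<open>strict_mono f\<close>]] show False
      by simp
  qed
  then obtain s where s: "s \<subseteq> S" "finite s" "\<Inter>(Z ` s) = {}"
    using empty_Inter[OF \<open>S \<subseteq> \<Phi>\<close>] by metis
  have "eventually (\<lambda>k. s \<subseteq> f k) sequentially"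
    using incseq_eventually_finite_subset[OF \<open>incseq f\<close> s(2)] s(1) by (simp add: S_def)
  then obtain k where "s \<subseteq> f k"
    by (meson eventually_sequentially order_refl)
  then have "\<Inter>(Z ` f (Suc k)) \<subseteq> \<Inter>(Z ` s)"
    using chain[rule_format, of k] by (intro INF_superset_mono) auto
  then show False
    using s(3) chain[rule_format, of k] by simp
qed

lemma Inter_subset_Union_Compl_insert_UN:
  assumes "\<And>w. w \<in> G \<Longrightarrow> \<Inter>(Z ` insert w s) \<inter> N \<subseteq> (\<Union>G'\<in>\<H> w. - \<Union>(Z ` G'))"
  shows "\<Inter>(Z ` s) \<inter> N \<subseteq> (\<Union>G'\<in>insert G (\<Union>w\<in>G. \<H> w). - \<Union>(Z ` G'))"
proof
  fix y assume y: "y \<in> \<Inter>(Z ` s) \<inter> N"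
  show "y \<in> (\<Union>G'\<in>insert G (\<Union>w\<in>G. \<H> w). - \<Union>(Z ` G'))"
  proof (cases "y \<in> \<Union>(Z ` G)")
    case True
    then obtain w where "w \<in> G" "y \<in> Z w"
      by blast
    with y have "y \<in> \<Inter>(Z ` insert w s) \<inter> N"
      by auto
    with assms[OF \<open>w \<in> G\<close>] have "y \<in> (\<Union>G'\<in>\<H> w. - \<Union>(Z ` G'))"
      by (meson subsetD)
    with \<open>w \<in> G\<close> show ?thesis
      by auto
  qed auto
qed

text \<open>Well-founded induction over the finite s \<subseteq> \<Phi> with nonempty \<open>\<Inter>(Z ` s)\<close>, ordered by reverse
  inclusion: if some G \<in> \<G> misses s, a point of \<open>\<Inter>(Z ` s)\<close> either avoids \<open>\<Union>(Z ` G)\<close> or lies in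
  some Z w with w \<in> G, and is then covered by the hypothesis for insert w s.\<close>

lemma centred_Inter_covered_by_finite_subfamily:
  fixes Z :: "'i \<Rightarrow> 'a set"
  assumes empty_Inter: "\<And>S. S \<subseteq> \<Phi> \<Longrightarrow> infinite S \<Longrightarrow> \<exists>s\<subseteq>S. finite s \<and> \<Inter>(Z ` s) = {}"
    and \<G>: "\<And>G. G \<in> \<G> \<Longrightarrow> finite G \<and> G \<subseteq> \<Phi>"
    and "finite s" "s \<subseteq> \<Phi>"
  shows "\<exists>\<G>'\<subseteq>\<G>. finite \<G>' \<and> \<Inter>(Z ` s) \<inter> (\<Union>G\<in>\<G>. - \<Union>(Z ` G)) \<subseteq> (\<Union>G\<in>\<G>'. - \<Union>(Z ` G))"
proof -
  define R where "R = {(s', s). s \<subset> s' \<and> finite s' \<and> s' \<subseteq> \<Phi> \<and> \<Inter>(Z ` s') \<noteq> {}}"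
  define covered where "covered s \<longleftrightarrow>
    (\<exists>\<G>'\<subseteq>\<G>. finite \<G>' \<and> \<Inter>(Z ` s) \<inter> (\<Union>G\<in>\<G>. - \<Union>(Z ` G)) \<subseteq> (\<Union>G\<in>\<G>'. - \<Union>(Z ` G)))" for s
  have "wf R"
    unfolding R_def by (rule wf_centred_supersets[OF empty_Inter])
  have "finite s \<longrightarrow> s \<subseteq> \<Phi> \<longrightarrow> covered s" for s
  proof (rule wf_induct[OF \<open>wf R\<close>], intro impI)
    fix s assume IH: "\<forall>s'. (s', s) \<in> R \<longrightarrow> finite s' \<longrightarrow> s' \<subseteq> \<Phi> \<longrightarrow> covered s'"
      and s: "finite s" "s \<subseteq> \<Phi>"
    show "covered s"
    proof (cases "\<exists>G\<in>\<G>. G \<inter> s = {}")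
      case False
      then have "\<Inter>(Z ` s) \<inter> (\<Union>G\<in>\<G>. - \<Union>(Z ` G)) = {}"
        by blast
      then show ?thesis
        unfolding covered_def by auto
    next
      case True
      then obtain G where G: "G \<in> \<G>" "G \<inter> s = {}"
        by blast
      have "covered (insert w s)" if "w \<in> G" for w
      proof (cases "\<Inter>(Z ` insert w s) = {}")
        case False
        with G \<open>w \<in> G\<close> s \<G> have "(insert w s, s) \<in> R"
          unfolding R_def by auto
        moreover have "finite (insert w s)" "insert w s \<subseteq> \<Phi>"
          using G \<open>w \<in> G\<close> s \<G> by auto
        ultimately show ?thesis
          using IH by blast
      qed (auto simp: covered_def)
      then obtain \<H> where \<H>: "\<And>w. w \<in> G \<Longrightarrow> \<H> w \<subseteq> \<G> \<and> finite (\<H> w)"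
        and \<H>_cover: "\<And>w. w \<in> G \<Longrightarrow>
          \<Inter>(Z ` insert w s) \<inter> (\<Union>G\<in>\<G>. - \<Union>(Z ` G)) \<subseteq> (\<Union>G\<in>\<H> w. - \<Union>(Z ` G))"
        unfolding covered_def by metis
      have "\<Inter>(Z ` s) \<inter> (\<Union>G\<in>\<G>. - \<Union>(Z ` G)) \<subseteq> (\<Union>G'\<in>insert G (\<Union>w\<in>G. \<H> w). - \<Union>(Z ` G'))"
        by (rule Inter_subset_Union_Compl_insert_UN[OF \<H>_cover])
      moreover have "insert G (\<Union>w\<in>G. \<H> w) \<subseteq> \<G>" "finite (insert G (\<Union>w\<in>G. \<H> w))"
        using \<H> G \<G> by auto
      ultimately show ?thesis
        unfolding covered_def by meson
    qed
  qed
  then have "covered s"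
    using assms(3,4) by simp
  then show ?thesis
    unfolding covered_def .
qed

lemma finite_subfamily_Union_Compl_eq:
  fixes Z :: "'i \<Rightarrow> 'a set"
  assumes "\<And>S. S \<subseteq> \<Phi> \<Longrightarrow> infinite S \<Longrightarrow> \<exists>s\<subseteq>S. finite s \<and> \<Inter>(Z ` s) = {}"
    and "\<And>G. G \<in> \<G> \<Longrightarrow> finite G \<and> G \<subseteq> \<Phi>"
  obtains \<G>' where "\<G>' \<subseteq> \<G>" "finite \<G>'" "(\<Union>G\<in>\<G>'. - \<Union>(Z ` G)) = (\<Union>G\<in>\<G>. - \<Union>(Z ` G))"
proof -
  have "\<exists>\<G>'\<subseteq>\<G>. finite \<G>' \<and> (\<Union>G\<in>\<G>. - \<Union>(Z ` G)) \<subseteq> (\<Union>G\<in>\<G>'. - \<Union>(Z ` G))"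
    using centred_Inter_covered_by_finite_subfamily[OF assms finite.emptyI empty_subsetI]
    by simp
  then obtain \<G>' where "\<G>' \<subseteq> \<G>" "finite \<G>'" "(\<Union>G\<in>\<G>. - \<Union>(Z ` G)) \<subseteq> (\<Union>G\<in>\<G>'. - \<Union>(Z ` G))"
    by blast
  then show thesis
    by (intro that[of \<G>']) auto
qed

subsection \<open>Stages of U-representations\<close>

lemma U_representation_mono:
  assumes "U_representation X V U" "1 \<le> i" "i \<le> j"
  shows "U i \<subseteq> U j"
  using assms(3)
proof (induction j rule: dec_induct)
  case (step n)
  then have "U n \<subseteq> U (Suc n)"
    using assms(1,2) unfolding U_representation_def by simp
  with step.IH show ?case
    by blast
qed simp

lemma U_representation_subset: "U_representation X V U \<Longrightarrow> 1 \<le> j \<Longrightarrow> U j \<subseteq> V"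
  unfolding U_representation_def by auto

lemma U_representation_eventually_mem:
  assumes "U_representation X V U" "x \<in> V"
  shows "eventually (\<lambda>j. x \<in> U j) sequentially"
proof -
  obtain i where "1 \<le> i" "x \<in> U i"
    using assms unfolding U_representation_def by auto
  then show ?thesis
    unfolding eventually_sequentially using U_representation_mono[OF assms(1)] by blast
qed

text \<open>Only n \<ge> 1 is meaningful (for n = 0 truncated subtraction gives the
  irrelevant U V 0), hence the index range {1..m} in \<open>stage_basic_sets\<close>.\<close>

definition cozero_stage_Inter :: "'a topology \<Rightarrow> ('a set \<Rightarrow> nat \<Rightarrow> 'a set) \<Rightarrow> nat \<Rightarrow> 'a set set \<Rightarrow> 'a set" where
  "cozero_stage_Inter X U m F = topspace X \<inter> (\<Inter>V\<in>F. U V (2 * m))"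

definition zero_stage :: "('a set \<Rightarrow> nat \<Rightarrow> 'a set) \<Rightarrow> 'a set \<times> nat \<Rightarrow> 'a set" where
  "zero_stage U p = U (fst p) (2 * snd p - 1)"

definition stage_basic_sets :: "'a topology \<Rightarrow> ('a set \<Rightarrow> nat \<Rightarrow> 'a set) \<Rightarrow> 'a set set \<Rightarrow> nat \<Rightarrow> 'a set set" where
  "stage_basic_sets X U A m = {cozero_stage_Inter X U m F - \<Union>(zero_stage U ` G) | F G.
     finite F \<and> F \<subseteq> A \<and> finite G \<and> G \<subseteq> A \<times> {1..m}}"

lemma cozero_stage_Inter_subset_Inter:
  assumes "\<forall>V\<in>F. U_representation X V (U V)" "1 \<le> m"
  shows "cozero_stage_Inter X U m F \<subseteq> \<Inter>F"
  using U_representation_subset[of X _ "U _" "2 * m"] assms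
  unfolding cozero_stage_Inter_def by fastforce

lemma zero_stage_subset:
  assumes "U_representation X (fst p) (U (fst p))" "1 \<le> snd p"
  shows "zero_stage U p \<subseteq> fst p"
  using U_representation_subset[OF assms(1)] assms(2) unfolding zero_stage_def by simp

lemma cozero_set_stage_basic:
  assumes reps: "\<forall>V\<in>A. U_representation X V (U V)" and "1 \<le> m"
    and "C \<in> stage_basic_sets X U A m"
  shows "cozero_set X C"
proof -
  obtain F G where C: "C = cozero_stage_Inter X U m F - \<Union>(zero_stage U ` G)"
    and FG: "finite F" "F \<subseteq> A" "finite G" "G \<subseteq> A \<times> {1..m}"
    using assms(3) unfolding stage_basic_sets_def by blast
  have C_eq: "C = topspace X \<inter> \<Inter>((\<lambda>V. U V (2 * m)) ` F \<union> (\<lambda>p. topspace X - zero_stage U p) ` G)"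
    unfolding C cozero_stage_Inter_def by auto
  have cozero_F: "cozero_set X (U V (2 * m))" if "V \<in> F" for V
    using reps FG(2) that \<open>1 \<le> m\<close> unfolding U_representation_def by blast
  have cozero_G: "cozero_set X (topspace X - zero_stage U p)" if "p \<in> G" for p
  proof -
    have "fst p \<in> A" "1 \<le> snd p"
      using FG(4) that by (auto simp: mem_Times_iff)
    then have "zero_set X (zero_stage U p)"
      using reps unfolding U_representation_def zero_stage_def by blast
    then show ?thesis
      by (rule cozero_set_Diff_zero_set)
  qed
  show ?thesis
    unfolding C_eq by (rule cozero_set_Inter) (use FG(1,3) cozero_F cozero_G in auto)
qed

lemma zero_stage_finite_subfamily_Union_Compl_eq:
  assumes A: "strongly_point_finite A" and reps: "\<forall>V\<in>A. U_representation X V (U V)"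
    and \<G>_sub: "\<And>G. G \<in> \<G> \<Longrightarrow> finite G \<and> G \<subseteq> A \<times> {1..m}"
  obtains \<G>' where "\<G>' \<subseteq> \<G>" "finite \<G>'"
    "(\<Union>G\<in>\<G>'. - \<Union>(zero_stage U ` G)) = (\<Union>G\<in>\<G>. - \<Union>(zero_stage U ` G))"
proof -
  have empty_Inter: "\<exists>s\<subseteq>S. finite s \<and> \<Inter>(zero_stage U ` s) = {}"
    if S: "S \<subseteq> A \<times> {1..m}" "infinite S" for S
  proof -
    have shrink: "zero_stage U p \<subseteq> fst p" if "p \<in> S" for p
    proof (rule zero_stage_subset)
      show "U_representation X (fst p) (U (fst p))" "1 \<le> snd p"
        using \<open>S \<subseteq> A \<times> {1..m}\<close> \<open>p \<in> S\<close> reps by (auto simp: mem_Times_iff)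
    qed
    obtain s where "s \<subseteq> S" "finite s" "\<Inter>(zero_stage U ` s) = {}"
      by (rule strongly_point_finite_shrinking[OF A finite_atLeastAtMost S shrink])
    then show ?thesis
      by blast
  qed
  show thesis
    using finite_subfamily_Union_Compl_eq[OF empty_Inter \<G>_sub] that by blast
qed

lemma point_finite_stage_family:
  assumes A: "strongly_point_finite A" and reps: "\<forall>V\<in>A. U_representation X V (U V)"
    and "1 \<le> m" and fin: "\<And>F. finite (\<G> F)"
  shows "point_finite X {cozero_stage_Inter X U m F - \<Union>(zero_stage U ` G) | F G.
    finite F \<and> F \<subseteq> A \<and> G \<in> \<G> F}" (is "point_finite X ?\<gamma>")
proof -
  let ?C = "\<lambda>F G. cozero_stage_Inter X U m F - \<Union>(zero_stage U ` G)"
  have "finite {C \<in> ?\<gamma>. y \<in> C}" for y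
  proof -
    let ?I = "SIGMA F:Pow {V \<in> A. y \<in> V}. \<G> F"
    have "{C \<in> ?\<gamma>. y \<in> C} \<subseteq> case_prod ?C ` ?I"
    proof
      fix C assume "C \<in> {C \<in> ?\<gamma>. y \<in> C}"
      then obtain F G where FG: "C = ?C F G" "F \<subseteq> A" "G \<in> \<G> F" "y \<in> C"
        by blast
      have "cozero_stage_Inter X U m F \<subseteq> \<Inter>F"
        using reps FG(2) \<open>1 \<le> m\<close> by (intro cozero_stage_Inter_subset_Inter) auto
      with FG have "(F, G) \<in> ?I"
        by auto
      then show "C \<in> case_prod ?C ` ?I"
        unfolding FG(1) by (rule image_eqI[rotated]) simp
    qed
    moreover have "finite (case_prod ?C ` ?I)"
      using strongly_point_finite_imp_finite[OF A] fin by (intro finite_imageI finite_SigmaI) auto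
    ultimately show ?thesis
      by (rule finite_subset)
  qed
  then show ?thesis
    unfolding point_finite_def by blast
qed

lemma stage_basic_sets_point_finite_refinement:
  assumes A: "strongly_point_finite A" and reps: "\<forall>V\<in>A. U_representation X V (U V)"
    and "1 \<le> m"
  obtains \<gamma> where "point_finite X \<gamma>" "\<forall>C\<in>\<gamma>. cozero_set X C"
    "\<Union>\<gamma> = \<Union>{C \<in> stage_basic_sets X U A m. C \<subseteq> W}"
proof -
  define P where "P F = cozero_stage_Inter X U m F" for F
  define \<G> where "\<G> F = {G. finite G \<and> G \<subseteq> A \<times> {1..m} \<and> P F - \<Union>(zero_stage U ` G) \<subseteq> W}" for F
  have "\<exists>\<G>'. \<G>' \<subseteq> \<G> F \<and> finite \<G>' \<and>
      (\<Union>G\<in>\<G>'. - \<Union>(zero_stage U ` G)) = (\<Union>G\<in>\<G> F. - \<Union>(zero_stage U ` G))" for F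
  proof -
    have "\<And>G. G \<in> \<G> F \<Longrightarrow> finite G \<and> G \<subseteq> A \<times> {1..m}"
      by (simp add: \<G>_def)
    then obtain \<G>' where "\<G>' \<subseteq> \<G> F" "finite \<G>'"
      "(\<Union>G\<in>\<G>'. - \<Union>(zero_stage U ` G)) = (\<Union>G\<in>\<G> F. - \<Union>(zero_stage U ` G))"
      by (rule zero_stage_finite_subfamily_Union_Compl_eq[OF A reps])
    then show ?thesis
      by blast
  qed
  then obtain \<G>' where \<G>': "\<And>F. \<G>' F \<subseteq> \<G> F" "\<And>F. finite (\<G>' F)"
    "\<And>F. (\<Union>G\<in>\<G>' F. - \<Union>(zero_stage U ` G)) = (\<Union>G\<in>\<G> F. - \<Union>(zero_stage U ` G))"
    by metis
  define \<gamma> where "\<gamma> = {P F - \<Union>(zero_stage U ` G) | F G. finite F \<and> F \<subseteq> A \<and> G \<in> \<G>' F}"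
  have \<gamma>_basic: "\<gamma> \<subseteq> {C \<in> stage_basic_sets X U A m. C \<subseteq> W}"
  proof
    fix C assume "C \<in> \<gamma>"
    then obtain F G where "C = P F - \<Union>(zero_stage U ` G)" "finite F" "F \<subseteq> A" "G \<in> \<G> F"
      unfolding \<gamma>_def using \<G>'(1) by blast
    then show "C \<in> {C \<in> stage_basic_sets X U A m. C \<subseteq> W}"
      unfolding stage_basic_sets_def \<G>_def P_def by blast
  qed
  have "\<Union>{C \<in> stage_basic_sets X U A m. C \<subseteq> W} \<subseteq> \<Union>\<gamma>"
  proof
    fix x assume "x \<in> \<Union>{C \<in> stage_basic_sets X U A m. C \<subseteq> W}"
    then obtain F G where FG: "finite F" "F \<subseteq> A" "G \<in> \<G> F" "x \<in> P F - \<Union>(zero_stage U ` G)"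
      unfolding stage_basic_sets_def \<G>_def P_def by auto
    then have "x \<in> (\<Union>G\<in>\<G>' F. - \<Union>(zero_stage U ` G))"
      using \<G>'(3)[of F] by blast
    then obtain G' where "G' \<in> \<G>' F" "x \<in> P F - \<Union>(zero_stage U ` G')"
      using FG(4) by blast
    moreover have "P F - \<Union>(zero_stage U ` G') \<in> \<gamma>"
      unfolding \<gamma>_def using FG(1,2) \<open>G' \<in> \<G>' F\<close> by blast
    ultimately show "x \<in> \<Union>\<gamma>"
      by blast
  qed
  show thesis
  proof
    show "point_finite X \<gamma>"
      unfolding \<gamma>_def P_def using point_finite_stage_family[OF A reps \<open>1 \<le> m\<close> \<G>'(2)] .
    show "\<forall>C\<in>\<gamma>. cozero_set X C"
      using \<gamma>_basic cozero_set_stage_basic[OF reps \<open>1 \<le> m\<close>] by blast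
    show "\<Union>\<gamma> = \<Union>{C \<in> stage_basic_sets X U A m. C \<subseteq> W}"
      using \<gamma>_basic \<open>\<Union>{C \<in> stage_basic_sets X U A m. C \<subseteq> W} \<subseteq> \<Union>\<gamma>\<close> by blast
  qed
qed

lemma almost_subbase_neighbourhood:
  assumes "subbase_of X (\<alpha> \<union> {topspace X - U V (2 * n - 1) | V n. V \<in> \<alpha> \<and> 1 \<le> n})"
    and "openin X W" "x \<in> W"
  obtains F G where "finite F" "F \<subseteq> \<alpha>" "finite G" "G \<subseteq> \<alpha> \<times> {1..}"
    "x \<in> topspace X \<inter> \<Inter>F - \<Union>(zero_stage U ` G)" "topspace X \<inter> \<Inter>F - \<Union>(zero_stage U ` G) \<subseteq> W"
proof -
  obtain B where B: "finite B" "B \<subseteq> \<alpha> \<union> {topspace X - U V (2 * n - 1) | V n. V \<in> \<alpha> \<and> 1 \<le> n}"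
    "x \<in> topspace X \<inter> \<Inter>B" "topspace X \<inter> \<Inter>B \<subseteq> W"
    by (rule subbase_of_neighbourhood[OF assms])
  have "\<exists>p \<in> \<alpha> \<times> {1..}. N = topspace X - zero_stage U p" if "N \<in> B - \<alpha>" for N
    using that B(2) unfolding zero_stage_def by force
  then obtain p where p: "\<And>N. N \<in> B - \<alpha> \<Longrightarrow> p N \<in> \<alpha> \<times> {1..} \<and> N = topspace X - zero_stage U (p N)"
    by metis
  have "topspace X \<inter> \<Inter>B = topspace X \<inter> \<Inter>(B \<inter> \<alpha>) - \<Union>(zero_stage U ` p ` (B - \<alpha>))"
  proof (intro equalityI subsetI)
    fix y assume "y \<in> topspace X \<inter> \<Inter>(B \<inter> \<alpha>) - \<Union>(zero_stage U ` p ` (B - \<alpha>))"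
    moreover have "N = topspace X - zero_stage U (p N)" if "N \<in> B - \<alpha>" for N
      using p that by blast
    ultimately show "y \<in> topspace X \<inter> \<Inter>B"
      by blast
  qed (use p in blast)
  moreover have "p ` (B - \<alpha>) \<subseteq> \<alpha> \<times> {1..}"
    using p by blast
  ultimately show thesis
    using B by (intro that[of "B \<inter> \<alpha>" "p ` (B - \<alpha>)"]) auto
qed

lemma openin_subset_Union_stage_basic_sets:
  assumes reps: "\<forall>V\<in>\<alpha>. U_representation X V (U V)"
    and subbase: "subbase_of X (\<alpha> \<union> {topspace X - U V (2 * n - 1) | V n. V \<in> \<alpha> \<and> 1 \<le> n})"
    and A: "incseq A" "\<alpha> = \<Union>(range A)" and "openin X W"
  shows "W \<subseteq> (\<Union>k. \<Union>{C \<in> stage_basic_sets X U (A k) (Suc k). C \<subseteq> W})"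
proof
  fix x assume "x \<in> W"
  obtain F G where FG: "finite F" "F \<subseteq> \<alpha>" "finite G" "G \<subseteq> \<alpha> \<times> {1..}"
    and x: "x \<in> topspace X \<inter> \<Inter>F - \<Union>(zero_stage U ` G)"
    and sub: "topspace X \<inter> \<Inter>F - \<Union>(zero_stage U ` G) \<subseteq> W"
    by (rule almost_subbase_neighbourhood[OF subbase \<open>openin X W\<close> \<open>x \<in> W\<close>])
  have "fst ` G \<subseteq> \<Union>(range A)"
    using FG(4) unfolding A(2) by force
  then have "eventually (\<lambda>k. fst ` G \<subseteq> A k) sequentially"
    using incseq_eventually_finite_subset[OF A(1) finite_imageI[OF FG(3)]] by simp
  moreover have "eventually (\<lambda>k. F \<subseteq> A k) sequentially"
    using incseq_eventually_finite_subset[OF A(1) FG(1)] FG(2) A(2) by simp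
  moreover have "eventually (\<lambda>k. \<forall>p\<in>G. snd p \<le> Suc k) sequentially"
  proof (rule eventually_ball_finite[OF FG(3)], rule ballI)
    fix p
    show "eventually (\<lambda>k. snd p \<le> Suc k) sequentially"
      using eventually_ge_at_top[of "snd p"] by (rule eventually_mono) simp
  qed
  moreover have "eventually (\<lambda>k. \<forall>V\<in>F. x \<in> U V (2 * Suc k)) sequentially"
  proof (rule eventually_ball_finite[OF FG(1)], rule ballI)
    fix V assume "V \<in> F"
    have "eventually (\<lambda>i. x \<in> U V i) sequentially"
    proof (rule U_representation_eventually_mem)
      show "U_representation X V (U V)" "x \<in> V"
        using reps FG(2) x \<open>V \<in> F\<close> by auto
    qed
    then obtain j where j: "\<forall>i\<ge>j. x \<in> U V i"
      unfolding eventually_sequentially by blast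
    show "eventually (\<lambda>k. x \<in> U V (2 * Suc k)) sequentially"
      unfolding eventually_sequentially using j by (intro exI[of _ j]) simp
  qed
  ultimately have ev: "eventually (\<lambda>k. fst ` G \<subseteq> A k \<and> F \<subseteq> A k \<and> (\<forall>p\<in>G. snd p \<le> Suc k) \<and>
      (\<forall>V\<in>F. x \<in> U V (2 * Suc k))) sequentially"
    by (intro eventually_conj)
  obtain k where k: "fst ` G \<subseteq> A k" "F \<subseteq> A k" "\<forall>p\<in>G. snd p \<le> Suc k"
    "\<forall>V\<in>F. x \<in> U V (2 * Suc k)"
    using eventually_happens'[OF sequentially_bot ev] by (elim exE conjE)
  define C where "C = cozero_stage_Inter X U (Suc k) F - \<Union>(zero_stage U ` G)"
  have "G \<subseteq> A k \<times> {1..Suc k}"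
  proof
    fix p assume "p \<in> G"
    then have "fst p \<in> A k" "1 \<le> snd p" "snd p \<le> Suc k"
      using FG(4) k(1,3) by auto
    then show "p \<in> A k \<times> {1..Suc k}"
      by (cases p) auto
  qed
  then have "C \<in> stage_basic_sets X U (A k) (Suc k)"
    unfolding C_def stage_basic_sets_def using FG(1,3) k(2) by (intro CollectI exI conjI) auto
  moreover have "x \<in> C"
    using x k(4) unfolding C_def cozero_stage_Inter_def by auto
  moreover have "cozero_stage_Inter X U (Suc k) F \<subseteq> topspace X \<inter> \<Inter>F"
    using cozero_stage_Inter_subset_Inter[of F X U "Suc k"] reps FG(2)
    unfolding cozero_stage_Inter_def by auto
  then have "C \<subseteq> W"
    using sub unfolding C_def by blast
  ultimately show "x \<in> (\<Union>k. \<Union>{C \<in> stage_basic_sets X U (A k) (Suc k). C \<subseteq> W})"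
    by blast
qed

theorem proposition5p7:
  fixes X :: "'a topology" and W :: "'a set"
  assumes "E_space X" and "openin X W"
  shows "\<exists>\<gamma>. sigma_point_finite X \<gamma> \<and> (\<forall>C\<in>\<gamma>. cozero_set X C) \<and> \<Union>\<gamma> = W"
proof -
  obtain \<alpha> where "almost_subbase X \<alpha>" "sigma_strongly_point_finite \<alpha>"
    using assms(1) unfolding E_space_def by blast
  then obtain \<V> :: "nat \<Rightarrow> 'a set set" and U where \<V>: "\<alpha> = \<Union>(range \<V>)" "\<And>k. strongly_point_finite (\<V> k)"
    and reps: "\<forall>V\<in>\<alpha>. U_representation X V (U V)"
    and subbase: "subbase_of X (\<alpha> \<union> {topspace X - U V (2 * n - 1) | V n. V \<in> \<alpha> \<and> 1 \<le> n})"
    unfolding almost_subbase_def sigma_strongly_point_finite_def by blast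
  define A where "A k = (\<Union>j\<le>k. \<V> j)" for k
  have "incseq A"
    unfolding A_def incseq_def by (intro allI impI UN_mono) auto
  moreover have "\<alpha> = \<Union>(range A)"
    unfolding A_def \<V>(1) by auto
  ultimately have A: "incseq A" "\<alpha> = \<Union>(range A)" .
  have "\<exists>\<gamma>. point_finite X \<gamma> \<and> (\<forall>C\<in>\<gamma>. cozero_set X C) \<and>
      \<Union>\<gamma> = \<Union>{C \<in> stage_basic_sets X U (A k) (Suc k). C \<subseteq> W}" for k
  proof -
    have "strongly_point_finite (A k)"
      unfolding A_def using \<V>(2) by (intro strongly_point_finite_UN) auto
    moreover have "\<forall>V\<in>A k. U_representation X V (U V)"
      using reps A(2) by blast
    ultimately obtain \<gamma> where "point_finite X \<gamma>" "\<forall>C\<in>\<gamma>. cozero_set X C"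
      "\<Union>\<gamma> = \<Union>{C \<in> stage_basic_sets X U (A k) (Suc k). C \<subseteq> W}"
      by (rule stage_basic_sets_point_finite_refinement[where m = "Suc k" and W = W]) simp
    then show ?thesis
      by blast
  qed
  then obtain \<gamma> where \<gamma>: "\<And>k. point_finite X (\<gamma> k)" "\<And>k. \<forall>C\<in>\<gamma> k. cozero_set X C"
    "\<And>k. \<Union>(\<gamma> k) = \<Union>{C \<in> stage_basic_sets X U (A k) (Suc k). C \<subseteq> W}"
    by metis
  have "\<Union>(\<Union>k. \<gamma> k) = (\<Union>k. \<Union>(\<gamma> k))"
    by blast
  also have "\<dots> = (\<Union>k. \<Union>{C \<in> stage_basic_sets X U (A k) (Suc k). C \<subseteq> W})"
    by (simp only: \<gamma>(3))
  also have "\<dots> = W"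
    using openin_subset_Union_stage_basic_sets[OF reps subbase A \<open>openin X W\<close>] by blast
  finally show ?thesis
    using \<gamma>(1,2) unfolding sigma_point_finite_def by (intro exI[of _ "\<Union>k. \<gamma> k"] conjI exI[of _ \<gamma>]) auto
qed

end
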